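(* Let $n\ge1$, $\tau>0$ and $\mathbf{s}=[s_1,\dots,s_n]^T\in\mathbb{R}^n$ (entries not necessarily distinct). Let $\widehat{P}\in\mathbb{R}^{n\times n}$ be defined by $$\widehat{P}[i,j]=\frac{\exp\big(((n+1-2i)s_j-\sum_{k=1}^n|s_j-s_k|)/\tau\big)}{\sum_{l=1}^n\exp\big(((n+1-2i)s_l-\sum_{k=1}^n|s_l-s_k|)/\tau\big)}.$$ Define $z_1,\dots,z_n$ recursively as follows: for row $i$, let $M_i=\{j: \widehat{P}[i,j]=\max_{j'}\widehat{P}[i,j']\}$; if some $j\in M_i$ is not among $z_1,\dots,z_{i-1}$, let $z_i$ be the smallest such $j$; otherwise let $z_i$ be the smallest element of $M_i$. Then $\mathbf{z}=[z_1,\dots,z_n]^T$ is a permutation of $\{1,\dots,n\}$. *)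

theory Defs
  imports Complex_Main
begin

text \<open>Vectors s in R^n are functions nat => real, only indices 1..n matter.
  Rows and columns of the matrix P-hat are indexed by 1..n.\<close>

definition score :: "nat \<Rightarrow> real \<Rightarrow> (nat \<Rightarrow> real) \<Rightarrow> nat \<Rightarrow> nat \<Rightarrow> real" where
  "score n \<tau> s i j =
     exp (((real n + 1 - 2 * real i) * s j - (\<Sum>k=1..n. \<bar>s j - s k\<bar>)) / \<tau>)"

definition Phat :: "nat \<Rightarrow> real \<Rightarrow> (nat \<Rightarrow> real) \<Rightarrow> nat \<Rightarrow> nat \<Rightarrow> real" where
  "Phat n \<tau> s i j = score n \<tau> s i j / (\<Sum>l=1..n. score n \<tau> s i l)"

definition rowmax :: "nat \<Rightarrow> real \<Rightarrow> (nat \<Rightarrow> real) \<Rightarrow> nat \<Rightarrow> nat set" where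
  "rowmax n \<tau> s i = {j \<in> {1..n}. Phat n \<tau> s i j = Max (Phat n \<tau> s i ` {1..n})}"

definition choose_z :: "nat \<Rightarrow> real \<Rightarrow> (nat \<Rightarrow> real) \<Rightarrow> nat \<Rightarrow> nat set \<Rightarrow> nat" where
  "choose_z n \<tau> s i Z =
     (if \<exists>j \<in> rowmax n \<tau> s i. j \<notin> Z
      then Min {j \<in> rowmax n \<tau> s i. j \<notin> Z}
      else Min (rowmax n \<tau> s i))"

fun zlist :: "nat \<Rightarrow> real \<Rightarrow> (nat \<Rightarrow> real) \<Rightarrow> nat \<Rightarrow> nat list" where
  "zlist n \<tau> s 0 = []"
| "zlist n \<tau> s (Suc i) = zlist n \<tau> s i @ [choose_z n \<tau> s (Suc i) (set (zlist n \<tau> s i))]"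

definition zvec :: "nat \<Rightarrow> real \<Rightarrow> (nat \<Rightarrow> real) \<Rightarrow> nat \<Rightarrow> nat" where
  "zvec n \<tau> s i = zlist n \<tau> s i ! (i - 1)"

end

theory Submission
  imports Defs
begin

text \<open>Row i of the matrix is the softmax of h(s j) / \<tau> with
  h(x) = (n + 1 - 2 i) x - \<Sum>k |x - s k|. This h is concave and piecewise linear, with right and
  left slopes 1 - 2 i + 2 #{k. s k > x} and 1 - 2 i + 2 #{k. s k \<ge> x} at x. These are odd
  integers, so h has a unique maximiser on the reals, namely the i-th largest entry v of s: the
  maximal entries of row i are the indices j with s j = v. The rows sharing the value v are the i
  with #{k. s k > v} < i \<le> #{k. s k \<ge> v}, exactly as many as there are indices j with s j = v.
  When the greedy choice reaches row i, at most i - 1 - #{k. s k > v} of these indices have been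
  used, so a fresh one is always available and z is injective.\<close>

definition count_gt :: "'a set \<Rightarrow> ('a \<Rightarrow> real) \<Rightarrow> real \<Rightarrow> nat" where
  "count_gt K s v = card {k\<in>K. v < s k}"

text \<open>A value v occupies the ranks count_gt K s v + 1, ..., count_ge K s v when the entries of s
  are sorted in decreasing order.\<close>

definition count_ge :: "'a set \<Rightarrow> ('a \<Rightarrow> real) \<Rightarrow> real \<Rightarrow> nat" where
  "count_ge K s v = card {k\<in>K. v \<le> s k}"

definition tilted_dev :: "'a set \<Rightarrow> ('a \<Rightarrow> real) \<Rightarrow> real \<Rightarrow> real \<Rightarrow> real" where
  "tilted_dev K s c x = c * x - (\<Sum>k\<in>K. \<bar>x - s k\<bar>)"

lemma sum_one_minus_two_of_bool:
  "finite K \<Longrightarrow>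
    (\<Sum>k\<in>K. 1 - 2 * of_bool (P k) :: real) = real (card K) - 2 * real (card {k\<in>K. P k})"
  by (simp add: sum_subtractf sum_distrib_left[symmetric] Int_def conj_commute)

lemma sum_abs_diff_lower:
  assumes "finite K" "x \<le> y"
  shows "(y - x) * (real (card K) - 2 * real (count_gt K s x)) \<le>
    (\<Sum>k\<in>K. \<bar>y - s k\<bar>) - (\<Sum>k\<in>K. \<bar>x - s k\<bar>)"
proof -
  have "(y - x) * (real (card K) - 2 * real (count_gt K s x)) =
      (\<Sum>k\<in>K. (y - x) * (1 - 2 * of_bool (x < s k)))"
    using assms(1) by (simp add: count_gt_def sum_one_minus_two_of_bool flip: sum_distrib_left)
  also have "\<dots> \<le> (\<Sum>k\<in>K. \<bar>y - s k\<bar> - \<bar>x - s k\<bar>)"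
    by (rule sum_mono) (use assms(2) in auto)
  finally show ?thesis by (simp add: sum_subtractf)
qed

lemma sum_abs_diff_upper:
  assumes "finite K" "x \<le> y"
  shows "(\<Sum>k\<in>K. \<bar>y - s k\<bar>) - (\<Sum>k\<in>K. \<bar>x - s k\<bar>) \<le>
    (y - x) * (real (card K) - 2 * real (count_ge K s y))"
proof -
  have "(\<Sum>k\<in>K. \<bar>y - s k\<bar> - \<bar>x - s k\<bar>) \<le>
      (\<Sum>k\<in>K. (y - x) * (1 - 2 * of_bool (y \<le> s k)))"
    by (rule sum_mono) (use assms(2) in auto)
  also have "\<dots> = (y - x) * (real (card K) - 2 * real (count_ge K s y))"
    using assms(1) by (simp add: count_ge_def sum_one_minus_two_of_bool flip: sum_distrib_left)
  finally show ?thesis by (simp add: sum_subtractf)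
qed

text \<open>The slope factors 1 + 2 count_gt - 2 i and 1 + 2 count_ge - 2 i are odd integers, so the
  hypotheses make them \<le> -1 and \<ge> 1 and the maximum is strict.\<close>

lemma tilted_dev_strict_max:
  assumes "finite K" "count_gt K s v < i" "i \<le> count_ge K s v" "x \<noteq> v"
  shows "tilted_dev K s (real (card K) + 1 - 2 * real i) x <
    tilted_dev K s (real (card K) + 1 - 2 * real i) v"
proof (cases "v < x")
  case True
  have "(x - v) * (1 + 2 * real (count_gt K s v) - 2 * real i) < 0"
    using True assms(2) by (intro mult_pos_neg) auto
  with sum_abs_diff_lower[OF assms(1), of v x s] True show ?thesis
    by (simp add: tilted_dev_def algebra_simps)
next
  case False
  with assms(4) have "x < v" by simp
  have "(v - x) * (1 + 2 * real (count_ge K s v) - 2 * real i) > 0"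
    using \<open>x < v\<close> assms(3) by (intro mult_pos_pos) auto
  with sum_abs_diff_upper[OF assms(1), of x v s] \<open>x < v\<close> show ?thesis
    by (simp add: tilted_dev_def algebra_simps)
qed

lemma count_ge_le_count_gt:
  assumes "finite K" "v < w"
  shows "count_ge K s w \<le> count_gt K s v"
  unfolding count_ge_def count_gt_def using assms by (intro card_mono) auto

lemma count_ge_eq_count_gt_plus_level:
  assumes "finite K"
  shows "count_ge K s v = count_gt K s v + card {k\<in>K. s k = v}"
proof -
  have "{k\<in>K. v \<le> s k} = {k\<in>K. v < s k} \<union> {k\<in>K. s k = v}" by auto
  with assms show ?thesis
    unfolding count_ge_def count_gt_def by (simp add: card_Un_disjoint disjoint_iff)
qed

lemma order_statistic_exists:
  assumes "finite K" "1 \<le> i" "i \<le> card K"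
  obtains j where "j \<in> K" "count_gt K s (s j) < i" "i \<le> count_ge K s (s j)"
proof -
  define A where "A = {j\<in>K. i \<le> count_ge K s (s j)}"
  have "K \<noteq> {}" using assms by auto
  then obtain j0 where "j0 \<in> K" "\<And>k. k \<in> K \<Longrightarrow> s j0 \<le> s k"
    using ex_is_arg_min_if_finite[OF assms(1), of s] by (auto simp: is_arg_min_linorder)
  then have "{k\<in>K. s j0 \<le> s k} = K" by auto
  with \<open>j0 \<in> K\<close> assms(3) have "A \<noteq> {}" unfolding A_def count_ge_def by auto
  moreover have "finite A" using assms(1) unfolding A_def by simp
  ultimately obtain j where j: "j \<in> A" and j_max: "\<And>a. a \<in> A \<Longrightarrow> s a \<le> s j"
    using ex_is_arg_min_if_finite[of A "uminus \<circ> s"] by (auto simp: is_arg_min_linorder)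
  have "count_gt K s (s j) < i"
  proof (rule ccontr)
    assume "\<not> count_gt K s (s j) < i"
    define B where "B = {k\<in>K. s j < s k}"
    have "card B \<noteq> 0"
      using \<open>\<not> count_gt K s (s j) < i\<close> assms(2) unfolding B_def count_gt_def by linarith
    then have "B \<noteq> {}" by auto
    moreover have "finite B" using assms(1) unfolding B_def by simp
    ultimately obtain k where k: "k \<in> B" and k_min: "\<And>b. b \<in> B \<Longrightarrow> s k \<le> s b"
      using ex_is_arg_min_if_finite[of B s] by (auto simp: is_arg_min_linorder)
    have "{l\<in>K. s k \<le> s l} = B" using k k_min unfolding B_def by force
    then have "k \<in> A"
      using k \<open>\<not> count_gt K s (s j) < i\<close> unfolding A_def B_def count_ge_def count_gt_def by auto
    with j_max k show False unfolding B_def by force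
  qed
  with j show thesis using that unfolding A_def by blast
qed

lemma tilted_dev_max_iff_order_statistic:
  assumes "finite K" "1 \<le> i" "i \<le> card K" "j \<in> K"
  defines "c \<equiv> real (card K) + 1 - 2 * real i"
  shows "(\<forall>j'\<in>K. tilted_dev K s c (s j') \<le> tilted_dev K s c (s j)) \<longleftrightarrow>
    count_gt K s (s j) < i \<and> i \<le> count_ge K s (s j)"
proof
  assume max: "\<forall>j'\<in>K. tilted_dev K s c (s j') \<le> tilted_dev K s c (s j)"
  obtain j0 where j0: "j0 \<in> K" "count_gt K s (s j0) < i" "i \<le> count_ge K s (s j0)"
    using order_statistic_exists[OF assms(1-3)] .
  have "s j = s j0"
    using max j0 tilted_dev_strict_max[OF assms(1) j0(2,3), of "s j"] unfolding c_def by force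
  with j0 show "count_gt K s (s j) < i \<and> i \<le> count_ge K s (s j)" by simp
next
  assume "count_gt K s (s j) < i \<and> i \<le> count_ge K s (s j)"
  then show "\<forall>j'\<in>K. tilted_dev K s c (s j') \<le> tilted_dev K s c (s j)"
    using tilted_dev_strict_max[OF assms(1)] unfolding c_def by (metis order.order_iff_strict)
qed

lemma score_eq_exp_tilted_dev:
  "score n \<tau> s i j = exp (tilted_dev {1..n} s (real n + 1 - 2 * real i) (s j) / \<tau>)"
  unfolding score_def tilted_dev_def by simp

lemma rowmax_eq_argmax_tilted_dev:
  fixes n i :: nat and s :: "nat \<Rightarrow> real"
  assumes "0 < \<tau>"
  defines "h \<equiv> \<lambda>j. tilted_dev {1..n} s (real n + 1 - 2 * real i) (s j)"
  shows "rowmax n \<tau> s i = {j\<in>{1..n}. \<forall>j'\<in>{1..n}. h j' \<le> h j}"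
proof -
  have Phat_le_iff: "Phat n \<tau> s i j' \<le> Phat n \<tau> s i j \<longleftrightarrow> h j' \<le> h j" if "j \<in> {1..n}" for j j'
  proof -
    have "0 < (\<Sum>l=1..n. score n \<tau> s i l)"
      using that by (intro sum_pos) (auto simp: score_def)
    with assms(1) show ?thesis
      unfolding Phat_def score_eq_exp_tilted_dev h_def by (simp add: divide_le_cancel)
  qed
  have "Phat n \<tau> s i j = Max (Phat n \<tau> s i ` {1..n}) \<longleftrightarrow> (\<forall>j'\<in>{1..n}. h j' \<le> h j)"
    if "j \<in> {1..n}" for j
    using that by (subst eq_commute) (auto simp: Max_eq_iff Phat_le_iff)
  then show ?thesis unfolding rowmax_def by auto
qed

lemma rowmax_iff_order_statistic:
  assumes "0 < \<tau>" "i \<in> {1..n}"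
  shows "j \<in> rowmax n \<tau> s i \<longleftrightarrow>
    j \<in> {1..n} \<and> count_gt {1..n} s (s j) < i \<and> i \<le> count_ge {1..n} s (s j)"
  using tilted_dev_max_iff_order_statistic[of "{1..n}" i j s] assms
  unfolding rowmax_eq_argmax_tilted_dev[OF assms(1)] by auto

lemma rowmax_eq_level_set:
  assumes "0 < \<tau>" "i \<in> {1..n}" "j0 \<in> rowmax n \<tau> s i"
  shows "rowmax n \<tau> s i = {j\<in>{1..n}. s j = s j0}"
proof -
  note row_i = rowmax_iff_order_statistic[OF assms(1,2)]
  have "s j = s j0" if "j \<in> rowmax n \<tau> s i" for j
  proof (rule ccontr)
    have "count_gt {1..n} s (s j) < i" "i \<le> count_ge {1..n} s (s j)"
      "count_gt {1..n} s (s j0) < i" "i \<le> count_ge {1..n} s (s j0)"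
      using that assms(3) unfolding row_i by auto
    moreover assume "s j \<noteq> s j0"
    then consider "s j < s j0" | "s j0 < s j" by linarith
    ultimately show False
      using count_ge_le_count_gt[of "{1..n}" "s j" "s j0" s]
        count_ge_le_count_gt[of "{1..n}" "s j0" "s j" s]
      by cases auto
  qed
  moreover have "j \<in> rowmax n \<tau> s i" if "j \<in> {1..n}" "s j = s j0" for j
    using that assms(3) unfolding row_i by simp
  ultimately show ?thesis using row_i by blast
qed

lemma card_overlapping_earlier_rows_less:
  assumes "0 < \<tau>" "i \<in> {1..n}"
  shows "card {t\<in>{1..<i}. rowmax n \<tau> s t \<inter> rowmax n \<tau> s i \<noteq> {}} < card (rowmax n \<tau> s i)"
proof -
  obtain j0 where j0: "j0 \<in> {1..n}" "count_gt {1..n} s (s j0) < i" "i \<le> count_ge {1..n} s (s j0)"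
    using order_statistic_exists[of "{1..n}" i s] assms(2) by auto
  define v where "v = s j0"
  have M: "rowmax n \<tau> s i = {j\<in>{1..n}. s j = v}"
    unfolding v_def using j0 assms
    by (intro rowmax_eq_level_set) (simp_all add: rowmax_iff_order_statistic)
  have "{t\<in>{1..<i}. rowmax n \<tau> s t \<inter> rowmax n \<tau> s i \<noteq> {}} \<subseteq> {count_gt {1..n} s v<..<i}"
  proof
    fix t assume t: "t \<in> {t\<in>{1..<i}. rowmax n \<tau> s t \<inter> rowmax n \<tau> s i \<noteq> {}}"
    then obtain j where "j \<in> rowmax n \<tau> s t" "s j = v" unfolding M by auto
    with t assms show "t \<in> {count_gt {1..n} s v<..<i}"
      using rowmax_iff_order_statistic[of \<tau> t n j s] by auto
  qed
  then have "card {t\<in>{1..<i}. rowmax n \<tau> s t \<inter> rowmax n \<tau> s i \<noteq> {}} \<le>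
      i - Suc (count_gt {1..n} s v)"
    by (metis card_greaterThanLessThan card_mono finite_greaterThanLessThan)
  also have "\<dots> < count_ge {1..n} s v - count_gt {1..n} s v"
    using j0 unfolding v_def by linarith
  also have "\<dots> = card (rowmax n \<tau> s i)"
    unfolding M by (simp add: count_ge_eq_count_gt_plus_level)
  finally show ?thesis .
qed

lemma choose_z_in_rowmax_unused:
  assumes "\<exists>j\<in>rowmax n \<tau> s i. j \<notin> Z"
  shows "choose_z n \<tau> s i Z \<in> rowmax n \<tau> s i - Z"
proof -
  have "finite {j\<in>rowmax n \<tau> s i. j \<notin> Z}" unfolding rowmax_def by simp
  with assms have "Min {j\<in>rowmax n \<tau> s i. j \<notin> Z} \<in> {j\<in>rowmax n \<tau> s i. j \<notin> Z}"
    by (intro Min_in) auto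
  with assms show ?thesis unfolding choose_z_def by simp
qed

lemma length_zlist [simp]: "length (zlist n \<tau> s i) = i"
  by (induction i) auto

lemma take_zlist: "i \<le> m \<Longrightarrow> take i (zlist n \<tau> s m) = zlist n \<tau> s i"
  by (induction m) (auto simp: le_Suc_eq)

lemma zvec_eq_nth_zlist:
  assumes "i \<in> {1..m}"
  shows "zvec n \<tau> s i = zlist n \<tau> s m ! (i - 1)"
proof -
  have "zvec n \<tau> s i = take i (zlist n \<tau> s m) ! (i - 1)"
    using assms by (simp add: zvec_def take_zlist)
  also have "\<dots> = zlist n \<tau> s m ! (i - 1)"
    using assms by simp
  finally show ?thesis .
qed

text \<open>An index of rowmax (Suc m) that is already used was chosen in an earlier row t, whose
  maximal set therefore meets rowmax (Suc m); so the hypothesis leaves a fresh index.\<close>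

lemma zlist_distinct_in_rowmax:
  assumes "\<And>i. i \<in> {1..m} \<Longrightarrow>
    card {t\<in>{1..<i}. rowmax n \<tau> s t \<inter> rowmax n \<tau> s i \<noteq> {}} < card (rowmax n \<tau> s i)"
  shows "distinct (zlist n \<tau> s m) \<and> (\<forall>t<m. zlist n \<tau> s m ! t \<in> rowmax n \<tau> s (Suc t))"
  using assms
proof (induction m)
  case 0
  show ?case by simp
next
  case (Suc m)
  define xs where "xs = zlist n \<tau> s m"
  define M where "M = rowmax n \<tau> s (Suc m)"
  have xs: "distinct xs" "\<And>t. t < m \<Longrightarrow> xs ! t \<in> rowmax n \<tau> s (Suc t)"
    using Suc by (auto simp: xs_def)
  have "set xs \<inter> M \<subseteq> (\<lambda>t. xs ! (t - 1)) ` {t\<in>{1..<Suc m}. rowmax n \<tau> s t \<inter> M \<noteq> {}}"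
  proof
    fix z assume "z \<in> set xs \<inter> M"
    then obtain t where "t < m" "xs ! t = z" "z \<in> M" by (auto simp: in_set_conv_nth xs_def)
    with xs(2) show "z \<in> (\<lambda>t. xs ! (t - 1)) ` {t\<in>{1..<Suc m}. rowmax n \<tau> s t \<inter> M \<noteq> {}}"
      by (intro image_eqI[of _ _ "Suc t"]) auto
  qed
  then have "card (set xs \<inter> M) \<le>
      card ((\<lambda>t. xs ! (t - 1)) ` {t\<in>{1..<Suc m}. rowmax n \<tau> s t \<inter> M \<noteq> {}})"
    by (intro card_mono) auto
  also have "\<dots> \<le> card {t\<in>{1..<Suc m}. rowmax n \<tau> s t \<inter> M \<noteq> {}}"
    by (rule card_image_le) simp
  also have "\<dots> < card M"
    using Suc.prems[of "Suc m"] unfolding M_def by simp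
  finally have "\<exists>j\<in>M. j \<notin> set xs"
    by (metis inf.absorb2 less_irrefl subsetI)
  then have "choose_z n \<tau> s (Suc m) (set xs) \<in> M - set xs"
    unfolding M_def by (rule choose_z_in_rowmax_unused)
  with xs show ?case by (auto simp: xs_def M_def nth_append less_Suc_eq)
qed

theorem proposition2:
  fixes n :: nat and \<tau> :: real and s :: "nat \<Rightarrow> real"
  assumes "n \<ge> 1" and "\<tau> > 0"
  shows "bij_betw (zvec n \<tau> s) {1..n} {1..n}"
proof -
  define xs where "xs = zlist n \<tau> s n"
  have xs: "distinct xs" "\<forall>t<n. xs ! t \<in> rowmax n \<tau> s (Suc t)"
    using zlist_distinct_in_rowmax[OF card_overlapping_earlier_rows_less[OF assms(2)]]
    unfolding xs_def by blast+
  have zvec_eq: "zvec n \<tau> s i = xs ! (i - 1)" if "i \<in> {1..n}" for i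
    using zvec_eq_nth_zlist[OF that] unfolding xs_def .
  have "inj_on (zvec n \<tau> s) {1..n}"
    using xs(1) by (intro inj_onI) (auto simp: zvec_eq nth_eq_iff_index_eq xs_def)
  moreover have "zvec n \<tau> s ` {1..n} \<subseteq> {1..n}"
    using xs(2) by (auto simp: zvec_eq rowmax_def)
  ultimately show ?thesis
    unfolding bij_betw_def by (simp add: endo_inj_surj)
qed

end
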